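(* Let $K$ be a $\mathbb{Z}$-field. For all $k,n\in\mathbb{N}$ with $n\geq 1$, the sets $$\{(x,y)\in K^2 \mid \mathrm{ord}\, x=\mathrm{ord}\, y\}\qquad\text{and}\qquad \{x\in K^\times \mid \mathrm{ord}\, x\equiv k \bmod n\}$$ are definable (with parameters from $K$) in the language $\mathcal{L}_{\mathrm{aff}}^{\pi}$.
   Context: A $\mathbb{Z}$-field is a valued field $K$ (valuation $\mathrm{ord}: K^\times\to\Gamma_K$, $\mathrm{ord}\,0=\infty$, valuation ring $R_K$) containing an element $\pi$ of minimal positive valuation, normalized so that $\mathrm{ord}\,\pi=1$, such that $\Gamma_K$ is a $\mathbb{Z}$-group (an ordered abelian group elementarily equivalent to $\mathbb{Z}$, with least positive element $1$; in particular for every $\gamma\in\Gamma_K$ and $n\ge1$ there is a unique $\gamma_n\in\{0,\dots,n-1\}$ with $\gamma\equiv\gamma_n \bmod n\Gamma_K$), and which is equipped with a compatible system of angular component maps $\mathrm{ac}_{\pi^m}:K\to R_K/\pi^mR_K$ ($m\ge1$), multiplicative on $K^\times$ with values in $(R_K/\pi^mR_K)^\times$, with $\mathrm{ac}_{\pi^m}(\pi)=1$, $\mathrm{ac}_{\pi^m}(u)=u \bmod \pi^m$ for units $u$, and $\mathrm{ac}_{\pi^m}(0)=0$. No assumption is made on the residue field, the characteristic, or Henselianity. For $x\in K^\times$ let $\gamma_n(x)\in\{0,\dots,n-1\}$ be the remainder of $\mathrm{ord}\,x$ modulo $n$. For $n,m\ge1$, $\Lambda_{n,m}$ is the quotient of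 $K$ by the equivalence relation: $x\sim y$ iff $x=y=0$, or $x,y\neq0$, $\gamma_n(x)=\gamma_n(y)$ and $\mathrm{ac}_{\pi^m}(x)=\mathrm{ac}_{\pi^m}(y)$; $\rho_{n,m}:K\to\Lambda_{n,m}$ is the quotient map (informally $\rho_{n,m}(x)=\pi^{\gamma_n(x)}\mathrm{ac}_{\pi^m}(x)$). The multi-sorted language $\mathcal{L}_{\mathrm{aff}}^{\pi}$ has a main sort $K$ with symbols $+$, $\cdot_\pi$ (the map $x\mapsto \pi x$) and the binary relation $x\mid y \iff \mathrm{ord}\,x\le \mathrm{ord}\,y$; auxiliary sorts $\Lambda_{n,m}$ (for all $n,m\ge1$) carrying no symbols; and the maps $\rho_{n,m}:K\to\Lambda_{n,m}$. Parameters from $K$ are allowed. *)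

theory Defs
  imports Main
begin

definition natmul :: "nat \<Rightarrow> 'g::ab_group_add \<Rightarrow> 'g" where
  "natmul n g = (\<Sum>i<n. g)"

definition zgroup :: "'g::linordered_ab_group_add \<Rightarrow> bool" where
  "zgroup one \<longleftrightarrow> 0 < one \<and> (\<forall>g. 0 < g \<longrightarrow> one \<le> g) \<and>
     (\<forall>n::nat. n \<ge> 1 \<longrightarrow> (\<forall>g. \<exists>!r. r < n \<and> (\<exists>d. g = natmul n d + natmul r one)))"

text \<open>The valuation is given by ord on K^x; ord 0 = infinity is encoded by
  the extended valuation val (None = infinity).\<close>
definition val :: "('a::field \<Rightarrow> 'g) \<Rightarrow> 'a \<Rightarrow> 'g option" where
  "val ord x = (if x = 0 then None else Some (ord x))"

definition vdvd :: "('a::field \<Rightarrow> 'g::linordered_ab_group_add) \<Rightarrow> 'a \<Rightarrow> 'a \<Rightarrow> bool" where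
  "vdvd ord x y \<longleftrightarrow> y = 0 \<or> (x \<noteq> 0 \<and> ord x \<le> ord y)"

definition vring :: "('a::field \<Rightarrow> 'g::linordered_ab_group_add) \<Rightarrow> 'a set" where
  "vring ord = {x. x = 0 \<or> 0 \<le> ord x}"

definition pcong :: "('a::field \<Rightarrow> 'g::linordered_ab_group_add) \<Rightarrow> 'a \<Rightarrow> nat \<Rightarrow> 'a \<Rightarrow> 'a \<Rightarrow> bool" where
  "pcong ord pi m a b \<longleftrightarrow> vdvd ord (pi ^ m) (a - b)"

text \<open>Angular component maps ac_{pi^m} : K \<rightarrow> R_K / pi^m R_K are represented by
  functions ac m : K \<rightarrow> R_K giving a representative; elements of R/pi^m R are
  compared with pcong.\<close>
definition zfield :: "('a::field \<Rightarrow> 'g::linordered_ab_group_add) \<Rightarrow> 'a \<Rightarrow> (nat \<Rightarrow> 'a \<Rightarrow> 'a) \<Rightarrow> bool" where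
  "zfield ord pi ac \<longleftrightarrow>
     \<comment> \<open>valuation K^x onto Gamma\<close>
     (\<forall>g. \<exists>x. x \<noteq> 0 \<and> ord x = g) \<and>
     (\<forall>x y. x \<noteq> 0 \<longrightarrow> y \<noteq> 0 \<longrightarrow> ord (x * y) = ord x + ord y) \<and>
     (\<forall>x y. x \<noteq> 0 \<longrightarrow> y \<noteq> 0 \<longrightarrow> x + y \<noteq> 0 \<longrightarrow> min (ord x) (ord y) \<le> ord (x + y)) \<and>
     \<comment> \<open>pi has minimal positive valuation, normalised to 1, Gamma a Z-group\<close>
     pi \<noteq> 0 \<and> zgroup (ord pi) \<and>
     \<comment> \<open>angular components\<close>
     (\<forall>m\<ge>1. \<forall>x. ac m x \<in> vring ord) \<and>
     (\<forall>m\<ge>1. \<forall>x. x \<noteq> 0 \<longrightarrow> ac m x \<noteq> 0 \<and> ord (ac m x) = 0) \<and>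
     (\<forall>m\<ge>1. \<forall>x y. x \<noteq> 0 \<longrightarrow> y \<noteq> 0 \<longrightarrow> pcong ord pi m (ac m (x * y)) (ac m x * ac m y)) \<and>
     (\<forall>m\<ge>1. pcong ord pi m (ac m pi) 1) \<and>
     (\<forall>m\<ge>1. \<forall>u. u \<noteq> 0 \<longrightarrow> ord u = 0 \<longrightarrow> pcong ord pi m (ac m u) u) \<and>
     (\<forall>m\<ge>1. pcong ord pi m (ac m 0) 0) \<and>
     \<comment> \<open>compatibility of the system\<close>
     (\<forall>m m' x. 1 \<le> m \<longrightarrow> m \<le> m' \<longrightarrow> pcong ord pi m (ac m' x) (ac m x))"

definition gamma :: "('a::field \<Rightarrow> 'g::linordered_ab_group_add) \<Rightarrow> 'a \<Rightarrow> nat \<Rightarrow> 'a \<Rightarrow> nat" where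
  "gamma ord pi n x = (THE r. r < n \<and> (\<exists>d. ord x = natmul n d + natmul r (ord pi)))"

text \<open>the equivalence relation defining Lambda_{n,m}\<close>
definition lsim :: "('a::field \<Rightarrow> 'g::linordered_ab_group_add) \<Rightarrow> 'a \<Rightarrow> (nat \<Rightarrow> 'a \<Rightarrow> 'a)
    \<Rightarrow> nat \<Rightarrow> nat \<Rightarrow> 'a \<Rightarrow> 'a \<Rightarrow> bool" where
  "lsim ord pi ac n m x y \<longleftrightarrow> (x = 0 \<and> y = 0) \<or>
     (x \<noteq> 0 \<and> y \<noteq> 0 \<and> gamma ord pi n x = gamma ord pi n y \<and> pcong ord pi m (ac m x) (ac m y))"

definition rho :: "('a::field \<Rightarrow> 'g::linordered_ab_group_add) \<Rightarrow> 'a \<Rightarrow> (nat \<Rightarrow> 'a \<Rightarrow> 'a)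
    \<Rightarrow> nat \<Rightarrow> nat \<Rightarrow> 'a \<Rightarrow> 'a set" where
  "rho ord pi ac n m x = {y. lsim ord pi ac n m x y}"

datatype 'a kterm = KVar nat | KConst 'a | KAdd "'a kterm" "'a kterm" | KPi "'a kterm"

text \<open>terms of an auxiliary sort Lambda_{n,m}; the sort is fixed by the atom/quantifier\<close>
datatype 'a lterm = LVar nat | LRho "'a kterm"

datatype 'a fm =
    FEq "'a kterm" "'a kterm"
  | FDiv "'a kterm" "'a kterm"
  | FLEq nat nat "'a lterm" "'a lterm"
  | FNot "'a fm"
  | FAnd "'a fm" "'a fm"
  | FExK nat "'a fm"
  | FExL nat nat nat "'a fm"

fun wf_fm :: "'a fm \<Rightarrow> bool" where
  "wf_fm (FLEq n m a b) = (1 \<le> n \<and> 1 \<le> m)"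
| "wf_fm (FNot p) = wf_fm p"
| "wf_fm (FAnd p q) = (wf_fm p \<and> wf_fm q)"
| "wf_fm (FExK i p) = wf_fm p"
| "wf_fm (FExL n m i p) = (1 \<le> n \<and> 1 \<le> m \<and> wf_fm p)"
| "wf_fm _ = True"

fun keval :: "'a::field \<Rightarrow> (nat \<Rightarrow> 'a) \<Rightarrow> 'a kterm \<Rightarrow> 'a" where
  "keval pi e (KVar i) = e i"
| "keval pi e (KConst c) = c"
| "keval pi e (KAdd s t) = keval pi e s + keval pi e t"
| "keval pi e (KPi t) = pi * keval pi e t"

text \<open>Variables of sort Lambda_{n,m} are valued by le n m i, an element of Lambda_{n,m}
  (an equivalence class).\<close>
fun leval :: "('a::field \<Rightarrow> 'g::linordered_ab_group_add) \<Rightarrow> 'a \<Rightarrow> (nat \<Rightarrow> 'a \<Rightarrow> 'a)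
    \<Rightarrow> nat \<Rightarrow> nat \<Rightarrow> (nat \<Rightarrow> 'a) \<Rightarrow> (nat \<Rightarrow> nat \<Rightarrow> nat \<Rightarrow> 'a set) \<Rightarrow> 'a lterm \<Rightarrow> 'a set" where
  "leval ord pi ac n m e le (LVar i) = le n m i"
| "leval ord pi ac n m e le (LRho t) = rho ord pi ac n m (keval pi e t)"

fun sat :: "('a::field \<Rightarrow> 'g::linordered_ab_group_add) \<Rightarrow> 'a \<Rightarrow> (nat \<Rightarrow> 'a \<Rightarrow> 'a)
    \<Rightarrow> 'a fm \<Rightarrow> (nat \<Rightarrow> 'a) \<Rightarrow> (nat \<Rightarrow> nat \<Rightarrow> nat \<Rightarrow> 'a set) \<Rightarrow> bool" where
  "sat ord pi ac (FEq s t) e le = (keval pi e s = keval pi e t)"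
| "sat ord pi ac (FDiv s t) e le = vdvd ord (keval pi e s) (keval pi e t)"
| "sat ord pi ac (FLEq n m a b) e le =
     (leval ord pi ac n m e le a = leval ord pi ac n m e le b)"
| "sat ord pi ac (FNot p) e le = (\<not> sat ord pi ac p e le)"
| "sat ord pi ac (FAnd p q) e le = (sat ord pi ac p e le \<and> sat ord pi ac q e le)"
| "sat ord pi ac (FExK i p) e le = (\<exists>x. sat ord pi ac p (e(i := x)) le)"
| "sat ord pi ac (FExL n m i p) e le =
     (\<exists>x. sat ord pi ac p e (le(n := (le n)(m := (le n m)(i := rho ord pi ac n m x)))))"

text \<open>Definability with parameters (parameters occur as constants KConst).\<close>
definition definable1 :: "('a::field \<Rightarrow> 'g::linordered_ab_group_add) \<Rightarrow> 'a \<Rightarrow> (nat \<Rightarrow> 'a \<Rightarrow> 'a)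
    \<Rightarrow> 'a set \<Rightarrow> bool" where
  "definable1 ord pi ac S \<longleftrightarrow>
     (\<exists>\<phi>. wf_fm \<phi> \<and> (\<forall>e le. sat ord pi ac \<phi> e le \<longleftrightarrow> e 0 \<in> S))"

definition definable2 :: "('a::field \<Rightarrow> 'g::linordered_ab_group_add) \<Rightarrow> 'a \<Rightarrow> (nat \<Rightarrow> 'a \<Rightarrow> 'a)
    \<Rightarrow> ('a \<times> 'a) set \<Rightarrow> bool" where
  "definable2 ord pi ac S \<longleftrightarrow>
     (\<exists>\<phi>. wf_fm \<phi> \<and> (\<forall>e le. sat ord pi ac \<phi> e le \<longleftrightarrow> (e 0, e 1) \<in> S))"

end

theory Submission
  imports Defs
begin

text \<open>
  (1) ord x = ord y (with ord 0 = \<infinity>) holds iff x | y and y | x, which is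
      a quantifier-free formula in the divisibility relation.

  (2) Let u range over units (u | 1 and 1 | u).  We show that
      x \<noteq> 0 and ord x \<equiv> k mod n  iff  \<exists>u unit. \<rho>_{n,1}(x) = \<rho>_{n,1}(\<pi>^k u).
      Since ord(\<pi>^k u) = k, the condition on the \<gamma>-component is exactly the
      residue condition; the angular component ac_\<pi>(\<pi>^k u) is congruent to u,
      so the ac-component can always be matched by the unit u = ac_\<pi>(x).
\<close>

lemma natmul_0 [simp]: "natmul 0 g = 0"
  unfolding natmul_def by simp

lemma natmul_Suc: "natmul (Suc a) g = g + natmul a g"
  unfolding natmul_def by (simp add: add.commute)

lemma natmul_add: "natmul (a + b) g = natmul a g + natmul b g"
  by (induction a) (simp_all add: natmul_Suc add.assoc)

lemma natmul_mult: "natmul (a * b) g = natmul a (natmul b g)"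
  by (induction a) (simp_all add: natmul_add natmul_Suc)

lemma natmul_plus: "natmul n (a + b) = natmul n a + natmul n b"
  by (induction n) (simp_all add: natmul_Suc algebra_simps)

lemma natmul_diff: "natmul n (a - b) = natmul n a - natmul n b"
  by (induction n) (simp_all add: natmul_Suc)

lemma natmul_div_mod: "natmul k g = natmul n (natmul (k div n) g) + natmul (k mod n) g"
  by (metis div_mult_mod_eq natmul_add natmul_mult mult.commute)

locale valuation =
  fixes ord :: "'a::field \<Rightarrow> 'g::linordered_ab_group_add"
  assumes ord_mult: "x \<noteq> 0 \<Longrightarrow> y \<noteq> 0 \<Longrightarrow> ord (x * y) = ord x + ord y"
    and ord_ultra: "x \<noteq> 0 \<Longrightarrow> y \<noteq> 0 \<Longrightarrow> x + y \<noteq> 0 \<Longrightarrow> min (ord x) (ord y) \<le> ord (x + y)"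
begin

lemma ord_one: "ord 1 = 0"
  using ord_mult[of 1 1] by simp

lemma ord_uminus: "z \<noteq> 0 \<Longrightarrow> ord (- z) = ord z"
proof -
  assume "z \<noteq> 0"
  have "ord (-1) + ord (-1) = 0"
    using ord_mult[of "-1" "-1"] ord_one by simp
  then have "ord (-1) = 0" by (simp add: add_eq_0_iff2)
  then show ?thesis using ord_mult[of "-1" z] \<open>z \<noteq> 0\<close> by simp
qed

lemma unit_iff_vdvd: "vdvd ord u 1 \<and> vdvd ord 1 u \<longleftrightarrow> u \<noteq> 0 \<and> ord u = 0"
  unfolding vdvd_def using ord_one by auto

definition vcong :: "'a \<Rightarrow> 'a \<Rightarrow> 'a \<Rightarrow> bool" where
  "vcong c a b \<longleftrightarrow> a = b \<or> ord c \<le> ord (a - b)"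

lemma vcong_refl: "vcong c a a"
  unfolding vcong_def by simp

lemma vcong_sym: "vcong c a b \<Longrightarrow> vcong c b a"
  unfolding vcong_def using ord_uminus[of "a - b"] by fastforce

lemma vcong_trans:
  assumes "vcong c a b" "vcong c b d" shows "vcong c a d"
proof (cases "a = b \<or> b = d \<or> a = d")
  case False
  then have "min (ord (a - b)) (ord (b - d)) \<le> ord ((a - b) + (b - d))"
    by (intro ord_ultra) auto
  with assms False show ?thesis
    unfolding vcong_def by (auto simp del: min_le_iff_disj) (meson min.bounded_iff order_trans)
qed (use assms vcong_refl in auto)

lemma vcong_mult_right:
  assumes "vcong c a b" and d: "d \<in> vring ord" shows "vcong c (a * d) (b * d)"
proof (cases "d = 0 \<or> a = b")
  case False
  then have "ord ((a - b) * d) = ord (a - b) + ord d" by (intro ord_mult) auto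
  moreover have "0 \<le> ord d" using d False by (auto simp: vring_def)
  ultimately have "ord (a - b) \<le> ord (a * d - b * d)"
    by (simp add: algebra_simps)
  with assms False show ?thesis
    unfolding vcong_def by auto
qed (auto simp: vcong_def)

lemma vcong_mult:
  assumes "vcong c a a'" "vcong c b b'" "b \<in> vring ord" "a' \<in> vring ord"
  shows "vcong c (a * b) (a' * b')"
proof -
  have "vcong c (a * b) (a' * b)" using vcong_mult_right[OF assms(1,3)] .
  moreover have "vcong c (a' * b) (a' * b')"
    using vcong_mult_right[OF assms(2,4)] by (simp add: mult.commute)
  ultimately show ?thesis by (rule vcong_trans)
qed

end

locale z_field =
  fixes ord :: "'a::field \<Rightarrow> 'g::linordered_ab_group_add"
    and pi :: 'a and ac :: "nat \<Rightarrow> 'a \<Rightarrow> 'a"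
  assumes zfield: "zfield ord pi ac"

sublocale z_field \<subseteq> valuation ord
  using zfield unfolding zfield_def by unfold_locales (elim conjE; simp)+

context z_field
begin

lemma pi_nonzero: "pi \<noteq> 0"
  using zfield unfolding zfield_def by (elim conjE) simp

lemma ord_pi_zgroup: "zgroup (ord pi)"
  using zfield unfolding zfield_def by (elim conjE) simp

lemma ord_pi_power: "ord (pi ^ k) = natmul k (ord pi)"
  by (induction k) (simp_all add: ord_one natmul_Suc ord_mult pi_nonzero)

lemma pcong_one_iff: "pcong ord pi 1 a b \<longleftrightarrow> vcong pi a b"
  unfolding pcong_def vdvd_def vcong_def using pi_nonzero by auto

lemma ac_vring: "ac 1 x \<in> vring ord"
  using zfield unfolding zfield_def by (elim conjE) simp

lemma ac_unit: "x \<noteq> 0 \<Longrightarrow> ac 1 x \<noteq> 0 \<and> ord (ac 1 x) = 0"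
  using zfield unfolding zfield_def by (elim conjE) simp

lemma ac_mult: "x \<noteq> 0 \<Longrightarrow> y \<noteq> 0 \<Longrightarrow> vcong pi (ac 1 (x * y)) (ac 1 x * ac 1 y)"
  using zfield unfolding pcong_one_iff[symmetric] zfield_def by (elim conjE) simp

lemma ac_pi: "vcong pi (ac 1 pi) 1"
  using zfield unfolding pcong_one_iff[symmetric] zfield_def by (elim conjE) simp

lemma ac_of_unit: "u \<noteq> 0 \<Longrightarrow> ord u = 0 \<Longrightarrow> vcong pi (ac 1 u) u"
  using zfield unfolding pcong_one_iff[symmetric] zfield_def by (elim conjE) simp

lemma ac_pi_power: "vcong pi (ac 1 (pi ^ k)) 1"
proof (induction k)
  case 0
  then show ?case using ac_of_unit[of 1] ord_one by simp
next
  case (Suc k)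
  have "vcong pi (ac 1 (pi * pi ^ k)) (ac 1 pi * ac 1 (pi ^ k))"
    using pi_nonzero by (intro ac_mult) auto
  moreover have "vcong pi (ac 1 pi * ac 1 (pi ^ k)) (1 * 1)"
    using ac_pi Suc ac_vring ord_one by (intro vcong_mult) (auto simp: vring_def)
  ultimately show ?case using vcong_trans by simp
qed

lemma ac_pi_power_unit:
  assumes "u \<noteq> 0" "ord u = 0" shows "vcong pi (ac 1 (pi ^ k * u)) u"
proof -
  have "vcong pi (ac 1 (pi ^ k * u)) (ac 1 (pi ^ k) * ac 1 u)"
    using pi_nonzero assms by (intro ac_mult) auto
  moreover have "vcong pi (ac 1 (pi ^ k) * ac 1 u) (1 * u)"
    using ac_pi_power ac_of_unit[OF assms] ac_vring ord_one by (intro vcong_mult) (auto simp: vring_def)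
  ultimately show ?thesis using vcong_trans by simp
qed

lemma gamma_unique:
  "1 \<le> n \<Longrightarrow> \<exists>!r. r < n \<and> (\<exists>d. ord x = natmul n d + natmul r (ord pi))"
  using ord_pi_zgroup unfolding zgroup_def by blast

lemma gamma_eqI: "r < n \<Longrightarrow> ord x = natmul n d + natmul r (ord pi) \<Longrightarrow> gamma ord pi n x = r"
  unfolding gamma_def by (rule the1_equality[OF gamma_unique]) auto

lemma gamma_spec:
  "1 \<le> n \<Longrightarrow> gamma ord pi n x < n \<and> (\<exists>d. ord x = natmul n d + natmul (gamma ord pi n x) (ord pi))"
  unfolding gamma_def by (rule theI'[OF gamma_unique])

lemma ord_cong_iff_gamma:
  assumes n: "1 \<le> n"
  shows "(\<exists>d. ord x = natmul n d + natmul k (ord pi)) \<longleftrightarrow> gamma ord pi n x = k mod n"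
proof
  assume "\<exists>d. ord x = natmul n d + natmul k (ord pi)"
  then obtain d where "ord x = natmul n d + natmul k (ord pi)" by blast
  then have "ord x = natmul n (d + natmul (k div n) (ord pi)) + natmul (k mod n) (ord pi)"
    using natmul_div_mod[of k "ord pi" n] by (simp add: natmul_plus add.assoc)
  then show "gamma ord pi n x = k mod n"
    using n by (intro gamma_eqI) auto
next
  assume "gamma ord pi n x = k mod n"
  then obtain d where "ord x = natmul n d + natmul (k mod n) (ord pi)"
    using gamma_spec[OF n, of x] by auto
  then have "ord x = natmul n (d - natmul (k div n) (ord pi)) + natmul k (ord pi)"
    using natmul_div_mod[of k "ord pi" n] by (simp add: natmul_diff)
  then show "\<exists>d. ord x = natmul n d + natmul k (ord pi)" by blast
qed

lemma lsim_one_iff: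
  "lsim ord pi ac n 1 x y \<longleftrightarrow> (x = 0 \<and> y = 0) \<or>
     (x \<noteq> 0 \<and> y \<noteq> 0 \<and> gamma ord pi n x = gamma ord pi n y \<and> vcong pi (ac 1 x) (ac 1 y))"
  unfolding lsim_def pcong_one_iff by (rule refl)

lemma lsim_refl: "lsim ord pi ac n 1 x x"
  unfolding lsim_one_iff using vcong_refl by auto

lemma lsim_sym: "lsim ord pi ac n 1 x y \<Longrightarrow> lsim ord pi ac n 1 y x"
  unfolding lsim_one_iff using vcong_sym by auto

lemma lsim_trans: "lsim ord pi ac n 1 x y \<Longrightarrow> lsim ord pi ac n 1 y z \<Longrightarrow> lsim ord pi ac n 1 x z"
  unfolding lsim_one_iff using vcong_trans by auto

lemma rho_eq_iff: "rho ord pi ac n 1 x = rho ord pi ac n 1 y \<longleftrightarrow> lsim ord pi ac n 1 x y"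
  unfolding rho_def using lsim_refl lsim_sym lsim_trans by blast

lemma ord_cong_iff_rho:
  assumes n: "1 \<le> n"
  shows "(\<exists>u. u \<noteq> 0 \<and> ord u = 0 \<and> rho ord pi ac n 1 x = rho ord pi ac n 1 (pi ^ k * u))
     \<longleftrightarrow> x \<noteq> 0 \<and> gamma ord pi n x = k mod n"
proof -
  have lsim_iff: "lsim ord pi ac n 1 x (pi ^ k * u) \<longleftrightarrow>
      x \<noteq> 0 \<and> gamma ord pi n x = k mod n \<and> vcong pi (ac 1 x) u"
    if u: "u \<noteq> 0" "ord u = 0" for u
  proof -
    have "pi ^ k * u \<noteq> 0" using u pi_nonzero by simp
    moreover have "ord (pi ^ k * u) = natmul n 0 + natmul k (ord pi)"
      using u pi_nonzero by (simp add: ord_mult ord_pi_power natmul_def)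
    then have "gamma ord pi n (pi ^ k * u) = k mod n"
      using ord_cong_iff_gamma[OF n] by blast
    moreover have "vcong pi (ac 1 x) (ac 1 (pi ^ k * u)) \<longleftrightarrow> vcong pi (ac 1 x) u"
      using ac_pi_power_unit[OF u, of k] vcong_sym vcong_trans by blast
    ultimately show ?thesis
      unfolding lsim_one_iff by auto
  qed
  show ?thesis
  proof
    assume "\<exists>u. u \<noteq> 0 \<and> ord u = 0 \<and> rho ord pi ac n 1 x = rho ord pi ac n 1 (pi ^ k * u)"
    then show "x \<noteq> 0 \<and> gamma ord pi n x = k mod n"
      using lsim_iff rho_eq_iff by blast
  next
    assume x: "x \<noteq> 0 \<and> gamma ord pi n x = k mod n"
    then have "rho ord pi ac n 1 x = rho ord pi ac n 1 (pi ^ k * ac 1 x)"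
      using lsim_iff[of "ac 1 x"] ac_unit rho_eq_iff vcong_refl by blast
    with x show "\<exists>u. u \<noteq> 0 \<and> ord u = 0 \<and> rho ord pi ac n 1 x = rho ord pi ac n 1 (pi ^ k * u)"
      using ac_unit by blast
  qed
qed

end

definition same_ord_fm :: "'a fm" where
  "same_ord_fm = FAnd (FDiv (KVar 0) (KVar 1)) (FDiv (KVar 1) (KVar 0))"

lemma wf_same_ord_fm: "wf_fm same_ord_fm"
  unfolding same_ord_fm_def by simp

lemma sat_same_ord_fm:
  "sat ord pi ac same_ord_fm e le \<longleftrightarrow> val ord (e 0) = val ord (e 1)"
  unfolding same_ord_fm_def by (auto simp: vdvd_def val_def)

definition ord_cong_fm :: "nat \<Rightarrow> nat \<Rightarrow> 'a::one fm" where
  "ord_cong_fm n k = FExK 1 (FAnd (FDiv (KVar 1) (KConst 1)) (FAnd (FDiv (KConst 1) (KVar 1))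
      (FLEq n 1 (LRho (KVar 0)) (LRho ((KPi ^^ k) (KVar 1))))))"

lemma wf_ord_cong_fm: "1 \<le> n \<Longrightarrow> wf_fm (ord_cong_fm n k)"
  unfolding ord_cong_fm_def by simp

lemma keval_KPi_power: "keval pi e ((KPi ^^ k) t) = pi ^ k * keval pi e t"
  by (induction k) simp_all

lemma (in z_field) sat_ord_cong_fm:
  "sat ord pi ac (ord_cong_fm n k) e le \<longleftrightarrow>
     (\<exists>u. u \<noteq> 0 \<and> ord u = 0 \<and> rho ord pi ac n 1 (e 0) = rho ord pi ac n 1 (pi ^ k * u))"
  unfolding ord_cong_fm_def by (simp add: keval_KPi_power) (use unit_iff_vdvd in blast)

theorem mainTheorem1:
  fixes ord :: "'a::field \<Rightarrow> 'g::linordered_ab_group_add"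
    and pi :: 'a and ac :: "nat \<Rightarrow> 'a \<Rightarrow> 'a"
  assumes "zfield ord pi ac"
  shows "definable2 ord pi ac {(x, y). val ord x = val ord y} \<and>
         (\<forall>k n::nat. 1 \<le> n \<longrightarrow>
            definable1 ord pi ac {x. x \<noteq> 0 \<and> (\<exists>d. ord x = natmul n d + natmul k (ord pi))})"
proof (intro conjI allI impI)
  interpret z_field ord pi ac by standard (rule assms)
  show "definable2 ord pi ac {(x, y). val ord x = val ord y}"
    unfolding definable2_def
    by (intro exI[of _ same_ord_fm]) (simp add: wf_same_ord_fm sat_same_ord_fm)
  fix k n :: nat
  assume n: "1 \<le> n"
  have "sat ord pi ac (ord_cong_fm n k) e le \<longleftrightarrow>
      e 0 \<in> {x. x \<noteq> 0 \<and> (\<exists>d. ord x = natmul n d + natmul k (ord pi))}" for e le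
    using sat_ord_cong_fm ord_cong_iff_rho[OF n] ord_cong_iff_gamma[OF n] by auto
  then show "definable1 ord pi ac {x. x \<noteq> 0 \<and> (\<exists>d. ord x = natmul n d + natmul k (ord pi))}"
    unfolding definable1_def using wf_ord_cong_fm[OF n]
    by (intro exI[of _ "ord_cong_fm n k"]) simp
qed

end
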